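(* Let $S$ be a zero-divisor free commutative $\Gamma$-semiring with zero having a left unity and a right unity. Then $S$ is a $\Gamma$-semifield if and only if for every non-constant fuzzy ideal $\mu$ of $S$ one has $\mu(x)=\mu(y)<\mu(0)$ for all $x,y\in S\setminus\{0\}$.
   Context: A $\Gamma$-semiring: $S$ and $\Gamma$ are additive commutative semigroups with a map $S\times\Gamma\times S\to S$, $(a,\alpha,b)\mapsto a\alpha b$, such that $(a+b)\alpha c=a\alpha c+b\alpha c$, $a\alpha(b+c)=a\alpha b+a\alpha c$, $a(\alpha+\beta)b=a\alpha b+a\beta b$, $a\alpha(b\beta c)=(a\alpha b)\beta c$. With zero: $(S,+)$, $(\Gamma,+)$ are monoids, $0_S\alpha x=0_S=x\alpha0_S$, $x0_\Gamma y=0_S$. Commutative: $a\alpha b=b\alpha a$ for all $a,b\in S,\alpha\in\Gamma$. Zero-divisor free: $a\alpha b=0$ implies $a=0$ or $\alpha=0$ or $b=0$. A left unity of $S$ is a finite family $e_i\in S,\delta_i\in\Gamma$ with $\sum_ie_i\delta_ia=a$ for all $a\in S$; a right unity is a finite family $\gamma_j\in\Gamma,f_j\in S$ with $\sum_ja\gamma_jf_j=a$ for all $a\in S$. A $\Gamma$-semifield is a commutative $\Gamma$-semiring such that for every $a\neq0$ in $S$ and $\alpha\neq0$ in $\Gamma$ there exist $b\in S,\beta\in\Gamma$ with $a\alpha b\beta d=d$ for all $d\in S$. A fuzzy ideal of $S$ is a map $\mu:S\to[0,1]$, not identically $0$, with $\mu(x+y)\ge\min[\mu(x),\mu(y)]$,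 $\mu(x\gamma y)\ge\mu(y)$ and $\mu(x\gamma y)\ge\mu(x)$ for all $x,y\in S,\gamma\in\Gamma$; by convention every fuzzy ideal satisfies $\mu(0)=1$. *)

theory Defs
  imports Complex_Main
begin

text \<open>A Gamma-semiring with zero, carried by types 's (for S) and 'g (for Gamma).
  addS, zS: addition and zero of S; addG, zG: addition and zero of Gamma;
  m a \<alpha> b: the ternary product a \<alpha> b.\<close>

definition gamma_semiring_zero ::
  "('s \<Rightarrow> 's \<Rightarrow> 's) \<Rightarrow> 's \<Rightarrow> ('g \<Rightarrow> 'g \<Rightarrow> 'g) \<Rightarrow> 'g \<Rightarrow> ('s \<Rightarrow> 'g \<Rightarrow> 's \<Rightarrow> 's) \<Rightarrow> bool" where
  "gamma_semiring_zero addS zS addG zG m \<longleftrightarrow>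
     (\<forall>a b c. addS (addS a b) c = addS a (addS b c)) \<and>
     (\<forall>a b. addS a b = addS b a) \<and>
     (\<forall>a. addS zS a = a) \<and>
     (\<forall>\<alpha> \<beta> \<gamma>. addG (addG \<alpha> \<beta>) \<gamma> = addG \<alpha> (addG \<beta> \<gamma>)) \<and>
     (\<forall>\<alpha> \<beta>. addG \<alpha> \<beta> = addG \<beta> \<alpha>) \<and>
     (\<forall>\<alpha>. addG zG \<alpha> = \<alpha>) \<and>
     (\<forall>a b c \<alpha>. m (addS a b) \<alpha> c = addS (m a \<alpha> c) (m b \<alpha> c)) \<and>
     (\<forall>a b c \<alpha>. m a \<alpha> (addS b c) = addS (m a \<alpha> b) (m a \<alpha> c)) \<and>
     (\<forall>a b \<alpha> \<beta>. m a (addG \<alpha> \<beta>) b = addS (m a \<alpha> b) (m a \<beta> b)) \<and>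
     (\<forall>a b c \<alpha> \<beta>. m a \<alpha> (m b \<beta> c) = m (m a \<alpha> b) \<beta> c) \<and>
     (\<forall>x \<alpha>. m zS \<alpha> x = zS \<and> m x \<alpha> zS = zS) \<and>
     (\<forall>x y. m x zG y = zS)"

definition gamma_commutative :: "('s \<Rightarrow> 'g \<Rightarrow> 's \<Rightarrow> 's) \<Rightarrow> bool" where
  "gamma_commutative m \<longleftrightarrow> (\<forall>a b \<alpha>. m a \<alpha> b = m b \<alpha> a)"

definition zero_divisor_free :: "'s \<Rightarrow> 'g \<Rightarrow> ('s \<Rightarrow> 'g \<Rightarrow> 's \<Rightarrow> 's) \<Rightarrow> bool" where
  "zero_divisor_free zS zG m \<longleftrightarrow>
     (\<forall>a \<alpha> b. m a \<alpha> b = zS \<longrightarrow> a = zS \<or> \<alpha> = zG \<or> b = zS)"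

definition sumS :: "('s \<Rightarrow> 's \<Rightarrow> 's) \<Rightarrow> 's \<Rightarrow> 's list \<Rightarrow> 's" where
  "sumS addS zS xs = foldr addS xs zS"

definition has_left_unity ::
  "('s \<Rightarrow> 's \<Rightarrow> 's) \<Rightarrow> 's \<Rightarrow> ('s \<Rightarrow> 'g \<Rightarrow> 's \<Rightarrow> 's) \<Rightarrow> bool" where
  "has_left_unity addS zS m \<longleftrightarrow>
     (\<exists>es :: ('s \<times> 'g) list. \<forall>a. sumS addS zS (map (\<lambda>(e, \<delta>). m e \<delta> a) es) = a)"

definition has_right_unity ::
  "('s \<Rightarrow> 's \<Rightarrow> 's) \<Rightarrow> 's \<Rightarrow> ('s \<Rightarrow> 'g \<Rightarrow> 's \<Rightarrow> 's) \<Rightarrow> bool" where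
  "has_right_unity addS zS m \<longleftrightarrow>
     (\<exists>fs :: ('g \<times> 's) list. \<forall>a. sumS addS zS (map (\<lambda>(\<gamma>, f). m a \<gamma> f) fs) = a)"

definition gamma_semifield ::
  "'s \<Rightarrow> 'g \<Rightarrow> ('s \<Rightarrow> 'g \<Rightarrow> 's \<Rightarrow> 's) \<Rightarrow> bool" where
  "gamma_semifield zS zG m \<longleftrightarrow> gamma_commutative m \<and>
     (\<forall>a \<alpha>. a \<noteq> zS \<longrightarrow> \<alpha> \<noteq> zG \<longrightarrow>
        (\<exists>b \<beta>. \<forall>d. m a \<alpha> (m b \<beta> d) = d))"

text \<open>Fuzzy ideal, including the convention mu(0) = 1.\<close>
definition fuzzy_ideal ::
  "('s \<Rightarrow> 's \<Rightarrow> 's) \<Rightarrow> 's \<Rightarrow> ('s \<Rightarrow> 'g \<Rightarrow> 's \<Rightarrow> 's) \<Rightarrow> ('s \<Rightarrow> real) \<Rightarrow> bool" where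
  "fuzzy_ideal addS zS m \<mu> \<longleftrightarrow>
     (\<forall>x. 0 \<le> \<mu> x \<and> \<mu> x \<le> 1) \<and>
     (\<exists>x. \<mu> x \<noteq> 0) \<and>
     (\<forall>x y. \<mu> (addS x y) \<ge> min (\<mu> x) (\<mu> y)) \<and>
     (\<forall>x y \<gamma>. \<mu> (m x \<gamma> y) \<ge> \<mu> y \<and> \<mu> (m x \<gamma> y) \<ge> \<mu> x) \<and>
     \<mu> zS = 1"

end

theory Submission
  imports Defs
begin

text \<open>If S is a \<Gamma>-semifield, every x \<mapsto> z \<delta> x with z, \<delta> nonzero has a right inverse, so a fuzzy
  ideal takes at every point a value at least \<mu> z; hence \<mu> is constant off 0, and this constant is
  below \<mu> 0 = 1 unless \<mu> is constant.
  Conversely, for a, \<alpha> nonzero the indicator of the ideal a \<alpha> S is a fuzzy ideal attaining 1 at the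
  nonzero element a \<alpha> a, so it must be constant: x \<mapsto> a \<alpha> x is surjective. Surjectivity for a
  nonzero term e_k \<delta>_k of the left unity turns the left unity into a single element E with
  E \<delta>_k d = d, and solving a \<alpha> b = E gives the inverse (b, \<delta>_k) of (a, \<alpha>).\<close>

lemma sumS_neq_zero_imp_ex:
  assumes "\<And>a. addS zS a = a"
    and "sumS addS zS (map f xs) \<noteq> zS"
  shows "\<exists>x\<in>set xs. f x \<noteq> zS"
  using assms(2) by (induction xs) (use assms(1) in \<open>auto simp: sumS_def\<close>)

lemma sumS_mult_right:
  assumes "gamma_semiring_zero addS zS addG zG m"
  shows "sumS addS zS (map (\<lambda>x. m (g x) \<beta> d) xs) = m (sumS addS zS (map g xs)) \<beta> d"
  using assms by (induction xs) (auto simp: sumS_def gamma_semiring_zero_def)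

lemma gamma_commutative_exchange:
  assumes "gamma_semiring_zero addS zS addG zG m" "gamma_commutative m"
  shows "m a \<alpha> (m b \<beta> c) = m a \<beta> (m b \<alpha> c)"
proof -
  have assoc: "\<And>a b c \<alpha> \<beta>. m a \<alpha> (m b \<beta> c) = m (m a \<alpha> b) \<beta> c"
    using assms(1) by (simp add: gamma_semiring_zero_def)
  have comm: "\<And>a b \<alpha>. m a \<alpha> b = m b \<alpha> a"
    using assms(2) by (simp add: gamma_commutative_def)
  have "m a \<alpha> (m b \<beta> c) = m (m a \<alpha> b) \<beta> c" by (rule assoc)
  also have "\<dots> = m c \<beta> (m a \<alpha> b)" by (rule comm)
  also have "\<dots> = m (m c \<beta> a) \<alpha> b" by (rule assoc)
  also have "\<dots> = m (m a \<beta> c) \<alpha> b" by (simp only: comm[of c \<beta> a])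
  also have "\<dots> = m a \<beta> (m c \<alpha> b)" by (rule assoc[symmetric])
  also have "\<dots> = m a \<beta> (m b \<alpha> c)" by (simp only: comm[of c \<alpha> b])
  finally show ?thesis .
qed

lemma left_unity_nonzero_term:
  assumes "gamma_semiring_zero addS zS addG zG m"
    and unity: "\<And>a. sumS addS zS (map (\<lambda>(e, \<delta>). m e \<delta> a) es) = a"
    and "c \<noteq> zS"
  shows "\<exists>e \<delta>. (e, \<delta>) \<in> set es \<and> e \<noteq> zS \<and> \<delta> \<noteq> zG"
proof -
  have "\<And>a. addS zS a = a" and zero_mult: "\<And>x. m zS \<delta> x = zS" "\<And>x y. m x zG y = zS" for \<delta>
    using assms(1) unfolding gamma_semiring_zero_def by meson+
  then obtain e \<delta> where "(e, \<delta>) \<in> set es" "m e \<delta> c \<noteq> zS"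
    using sumS_neq_zero_imp_ex[of addS zS "\<lambda>(e, \<delta>). m e \<delta> c" es] unity[of c] \<open>c \<noteq> zS\<close> by auto
  moreover from \<open>m e \<delta> c \<noteq> zS\<close> have "e \<noteq> zS" "\<delta> \<noteq> zG"
    using zero_mult by auto
  ultimately show ?thesis by blast
qed

lemma fuzzy_ideal_indicator:
  assumes "zS \<in> I"
    and "\<And>x y. x \<in> I \<Longrightarrow> y \<in> I \<Longrightarrow> addS x y \<in> I"
    and "\<And>x y \<gamma>. y \<in> I \<Longrightarrow> m x \<gamma> y \<in> I"
    and "\<And>x y \<gamma>. x \<in> I \<Longrightarrow> m x \<gamma> y \<in> I"
  shows "fuzzy_ideal addS zS m (\<lambda>x. of_bool (x \<in> I))"
  using assms unfolding fuzzy_ideal_def by auto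

lemma fuzzy_ideal_left_multiples:
  assumes "gamma_semiring_zero addS zS addG zG m" "gamma_commutative m"
  shows "fuzzy_ideal addS zS m (\<lambda>x. of_bool (x \<in> range (m a \<alpha>)))"
proof (rule fuzzy_ideal_indicator)
  have assoc: "\<And>b c \<gamma>. m (m a \<alpha> b) \<gamma> c = m a \<alpha> (m b \<gamma> c)"
    and distr: "\<And>b c. addS (m a \<alpha> b) (m a \<alpha> c) = m a \<alpha> (addS b c)"
    and "m a \<alpha> zS = zS"
    using assms(1) by (simp_all add: gamma_semiring_zero_def)
  then show "zS \<in> range (m a \<alpha>)"
    by (metis rangeI)
  show "addS x y \<in> range (m a \<alpha>)" if "x \<in> range (m a \<alpha>)" "y \<in> range (m a \<alpha>)" for x y
    using that distr by auto
  show "m x \<gamma> y \<in> range (m a \<alpha>)" if "x \<in> range (m a \<alpha>)" for x y \<gamma>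
    using that assoc by auto
  then show "m y \<gamma> x \<in> range (m a \<alpha>)" if "x \<in> range (m a \<alpha>)" for x y \<gamma>
    using that assms(2) by (simp add: gamma_commutative_def)
qed

lemma semifield_fuzzy_ideal_le:
  assumes "gamma_semifield zS zG m" "fuzzy_ideal addS zS m \<mu>"
    and "z \<noteq> zS" "\<delta> \<noteq> zG"
  shows "\<mu> z \<le> \<mu> d"
proof -
  obtain b \<beta> where "\<And>d. m z \<delta> (m b \<beta> d) = d"
    using assms(1,3,4) unfolding gamma_semifield_def by blast
  then have "\<mu> d = \<mu> (m z \<delta> (m b \<beta> d))" by simp
  then show ?thesis
    using assms(2) unfolding fuzzy_ideal_def by metis
qed

lemma semifield_nonconstant_fuzzy_ideal:
  assumes "gamma_semifield zS zG m" "fuzzy_ideal addS zS m \<mu>"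
    and "\<delta> \<noteq> zG" and nonconst: "\<exists>u v. \<mu> u \<noteq> \<mu> v"
    and "x \<noteq> zS" "y \<noteq> zS"
  shows "\<mu> x = \<mu> y \<and> \<mu> y < \<mu> zS"
proof
  have le: "\<mu> z \<le> \<mu> d" if "z \<noteq> zS" for z d
    using semifield_fuzzy_ideal_le[OF assms(1,2) that assms(3)] .
  show "\<mu> x = \<mu> y"
    using le[OF \<open>x \<noteq> zS\<close>, of y] le[OF \<open>y \<noteq> zS\<close>, of x] by simp
  have bounds: "0 \<le> \<mu> d \<and> \<mu> d \<le> 1" for d
    using assms(2) by (simp add: fuzzy_ideal_def)
  have mu_zero: "\<mu> zS = 1"
    using assms(2) by (simp add: fuzzy_ideal_def)
  show "\<mu> y < \<mu> zS"
  proof (rule ccontr)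
    assume "\<not> \<mu> y < \<mu> zS"
    then have "\<mu> d = 1" for d
      using le[OF \<open>y \<noteq> zS\<close>, of d] bounds[of y] bounds[of d] mu_zero by linarith
    then show False using nonconst by simp
  qed
qed

lemma left_mult_surj_if_fuzzy_ideals_separate_zero:
  assumes "gamma_semiring_zero addS zS addG zG m" "gamma_commutative m"
    and "zero_divisor_free zS zG m"
    and separate: "\<And>\<mu> x. fuzzy_ideal addS zS m \<mu> \<Longrightarrow> \<exists>u v. \<mu> u \<noteq> \<mu> v \<Longrightarrow> x \<noteq> zS \<Longrightarrow>
      \<mu> x < \<mu> zS"
    and "a \<noteq> zS" "\<alpha> \<noteq> zG"
  shows "surj (m a \<alpha>)"
proof -
  define \<mu> where "\<mu> x = (of_bool (x \<in> range (m a \<alpha>)) :: real)" for x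
  have ideal: "fuzzy_ideal addS zS m \<mu>"
    unfolding \<mu>_def by (rule fuzzy_ideal_left_multiples[OF assms(1,2)])
  have "m a \<alpha> a \<noteq> zS"
    using assms(3,5,6) by (auto simp: zero_divisor_free_def)
  moreover have "\<mu> (m a \<alpha> a) = \<mu> zS"
    using ideal by (simp add: \<mu>_def fuzzy_ideal_def)
  ultimately have "\<mu> d = \<mu> zS" for d
    using separate[OF ideal] by fastforce
  moreover have "\<mu> zS = 1"
    using ideal by (simp add: fuzzy_ideal_def)
  ultimately show ?thesis
    by (auto simp: \<mu>_def)
qed

lemma semifield_if_left_mult_surj:
  assumes "gamma_semiring_zero addS zS addG zG m" "gamma_commutative m"
    and "has_left_unity addS zS m"
    and surj: "\<And>a \<alpha>. a \<noteq> zS \<Longrightarrow> \<alpha> \<noteq> zG \<Longrightarrow> surj (m a \<alpha>)"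
  shows "gamma_semifield zS zG m"
  unfolding gamma_semifield_def
proof (intro conjI allI impI)
  show "gamma_commutative m" by (rule assms(2))
  have assoc: "\<And>a b c \<alpha> \<beta>. m a \<alpha> (m b \<beta> c) = m (m a \<alpha> b) \<beta> c"
    using assms(1) by (simp add: gamma_semiring_zero_def)
  obtain es where unity: "\<And>a. sumS addS zS (map (\<lambda>(e, \<delta>). m e \<delta> a) es) = a"
    using assms(3) by (auto simp: has_left_unity_def)
  fix a \<alpha>
  assume "a \<noteq> zS" "\<alpha> \<noteq> zG"
  obtain ek \<delta>k where "ek \<noteq> zS" "\<delta>k \<noteq> zG"
    using left_unity_nonzero_term[OF assms(1) unity \<open>a \<noteq> zS\<close>] by blast
  define y where "y e = inv (m ek \<delta>k) e" for e
  have y: "m ek \<delta>k (y e) = e" for e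
    unfolding y_def by (rule surj_f_inv_f[OF surj[OF \<open>ek \<noteq> zS\<close> \<open>\<delta>k \<noteq> zG\<close>]])
  define E where "E = sumS addS zS (map (\<lambda>(e, \<delta>). m ek \<delta> (y e)) es)"
  have E: "m E \<delta>k d = d" for d
  proof -
    have "m e \<delta> d = m (m ek \<delta> (y e)) \<delta>k d" for e \<delta>
    proof -
      have "m e \<delta> d = m ek \<delta>k (m (y e) \<delta> d)" by (simp add: assoc y)
      also have "\<dots> = m ek \<delta> (m (y e) \<delta>k d)"
        by (rule gamma_commutative_exchange[OF assms(1,2)])
      finally show ?thesis by (simp add: assoc)
    qed
    then have terms: "map (\<lambda>(e, \<delta>). m e \<delta> d) es
        = map (\<lambda>p. m ((\<lambda>(e, \<delta>). m ek \<delta> (y e)) p) \<delta>k d) es"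
      by (auto split: prod.splits)
    have "d = sumS addS zS (map (\<lambda>p. m ((\<lambda>(e, \<delta>). m ek \<delta> (y e)) p) \<delta>k d) es)"
      unfolding terms[symmetric] using unity[of d] by simp
    also have "\<dots> = m E \<delta>k d"
      unfolding E_def by (rule sumS_mult_right[OF assms(1)])
    finally show ?thesis by simp
  qed
  obtain b where "m a \<alpha> b = E"
    using surj[OF \<open>a \<noteq> zS\<close> \<open>\<alpha> \<noteq> zG\<close>] by (metis surjD)
  then show "\<exists>b \<beta>. \<forall>d. m a \<alpha> (m b \<beta> d) = d"
    using E assoc by metis
qed

theorem theorem3p10:
  fixes addS :: "'s \<Rightarrow> 's \<Rightarrow> 's" and zS :: 's
    and addG :: "'g \<Rightarrow> 'g \<Rightarrow> 'g" and zG :: 'g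
    and m :: "'s \<Rightarrow> 'g \<Rightarrow> 's \<Rightarrow> 's"
  assumes "gamma_semiring_zero addS zS addG zG m"
    and "gamma_commutative m"
    and "zero_divisor_free zS zG m"
    and "has_left_unity addS zS m"
    and "has_right_unity addS zS m"
  shows "gamma_semifield zS zG m \<longleftrightarrow>
    (\<forall>\<mu> :: 's \<Rightarrow> real. fuzzy_ideal addS zS m \<mu> \<and> (\<exists>x y. \<mu> x \<noteq> \<mu> y) \<longrightarrow>
       (\<forall>x y. x \<noteq> zS \<longrightarrow> y \<noteq> zS \<longrightarrow> \<mu> x = \<mu> y \<and> \<mu> y < \<mu> zS))"
proof
  assume semifield: "gamma_semifield zS zG m"
  obtain es where unity: "\<And>a. sumS addS zS (map (\<lambda>(e, \<delta>). m e \<delta> a) es) = a"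
    using assms(4) by (auto simp: has_left_unity_def)
  show "\<forall>\<mu> :: 's \<Rightarrow> real. fuzzy_ideal addS zS m \<mu> \<and> (\<exists>x y. \<mu> x \<noteq> \<mu> y) \<longrightarrow>
       (\<forall>x y. x \<noteq> zS \<longrightarrow> y \<noteq> zS \<longrightarrow> \<mu> x = \<mu> y \<and> \<mu> y < \<mu> zS)"
    using semifield_nonconstant_fuzzy_ideal[OF semifield] left_unity_nonzero_term[OF assms(1) unity]
    by blast
next
  assume "\<forall>\<mu> :: 's \<Rightarrow> real. fuzzy_ideal addS zS m \<mu> \<and> (\<exists>x y. \<mu> x \<noteq> \<mu> y) \<longrightarrow>
       (\<forall>x y. x \<noteq> zS \<longrightarrow> y \<noteq> zS \<longrightarrow> \<mu> x = \<mu> y \<and> \<mu> y < \<mu> zS)"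
  then have "surj (m a \<alpha>)" if "a \<noteq> zS" "\<alpha> \<noteq> zG" for a \<alpha>
    using left_mult_surj_if_fuzzy_ideals_separate_zero[OF assms(1-3) _ that] by blast
  then show "gamma_semifield zS zG m"
    using semifield_if_left_mult_surj[OF assms(1,2,4)] by blast
qed

end
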